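(* Fix a directed edge set $\mathcal{E}$ and a randomized design with $0<\mathbb{E}[z_i]<1$ for all $i$. Suppose there exist reals $\rho_i\in[0,1)$, $i\in[n]$, such that for every $(k,i)\in\mathcal{E}$, $\mathbb{P}(z_k=1)>0$ and $\mathbb{P}(z_i=1\mid z_k=1)=\rho_i$. Then under the heterogeneous additive network effects model the estimator \[\widehat{\mathrm{ATE}}_{-\alpha}=\frac1n\sum_{i\in[n]}\Big(\frac{z_i}{\mathbb{E}[z_i]}-\frac{(1-z_i)\rho_i}{\mathbb{E}[z_i](1-\rho_i)}\Big)\big(Y_i({\bf z})-\alpha_i\big)\] is unbiased for $\mathrm{ATE}$.
   Context: Population $[n]$; random treatment vector ${\bf z}\in\{0,1\}^n$ drawn from a randomized design. Heterogeneous additive network effects model: $Y_i({\bf z})=\alpha_i+\beta_iz_i+\sum_{k\in[n]}\gamma_{ki}z_k$ with deterministic real parameters, $\gamma_{ki}=0$ unless $(k,i)\in\mathcal{E}$, where $\mathcal{E}$ is a set of ordered pairs $(k,i)$, $k\neq i$; $\alpha_i=Y_i({\bf 0})$. $\mathrm{ATE}=\frac1n\sum_i\beta_i$. (For $i$ with no incoming edges, $\rho_i\in[0,1)$ is arbitrary.) *)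

theory Defs
  imports "HOL-Probability.Probability"
begin

text \<open>A randomized design on population {0..<n} is a pmf over treatment sets
  (the set of treated units); z_i(S) = 1 iff i in S.\<close>

definition zv :: "nat set \<Rightarrow> nat \<Rightarrow> real" where
  "zv S i = (if i \<in> S then 1 else 0)"

definition Ymodel :: "(nat \<Rightarrow> real) \<Rightarrow> (nat \<Rightarrow> real) \<Rightarrow> (nat \<Rightarrow> nat \<Rightarrow> real)
    \<Rightarrow> nat \<Rightarrow> nat set \<Rightarrow> nat \<Rightarrow> real" where
  "Ymodel \<alpha> \<beta> \<gamma> n S i = \<alpha> i + \<beta> i * zv S i + (\<Sum>k<n. \<gamma> k i * zv S k)"

definition ATE :: "nat \<Rightarrow> (nat \<Rightarrow> real) \<Rightarrow> real" where
  "ATE n \<beta> = (\<Sum>i<n. \<beta> i) / real n"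

definition ATE_hat_minus_alpha :: "nat set pmf \<Rightarrow> (nat \<Rightarrow> real) \<Rightarrow> (nat \<Rightarrow> real)
    \<Rightarrow> (nat \<Rightarrow> real) \<Rightarrow> (nat \<Rightarrow> nat \<Rightarrow> real) \<Rightarrow> nat \<Rightarrow> nat set \<Rightarrow> real" where
  "ATE_hat_minus_alpha D \<rho> \<alpha> \<beta> \<gamma> n S =
     (\<Sum>i<n. (zv S i / measure_pmf.expectation D (\<lambda>T. zv T i)
              - (1 - zv S i) * \<rho> i / (measure_pmf.expectation D (\<lambda>T. zv T i) * (1 - \<rho> i)))
            * (Ymodel \<alpha> \<beta> \<gamma> n S i - \<alpha> i)) / real n"

end

theory Submission
  imports Defs
begin

text \<open>The estimator weight of unit \<open>i\<close> has mean one against \<open>z\<^sub>i\<close>,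
  which recovers \<open>\<beta>\<^sub>i\<close>, and mean zero against \<open>z\<^sub>k\<close> for every in-neighbour \<open>k\<close>, because
  \<open>P(z\<^sub>i = 1, z\<^sub>k = 1) = \<rho>\<^sub>i P(z\<^sub>k = 1)\<close> makes the two parts of the weight cancel. Since the model is
  linear in \<open>z\<close>, linearity of expectation gives unbiasedness.\<close>

definition estimator_weight :: "nat set pmf \<Rightarrow> (nat \<Rightarrow> real) \<Rightarrow> nat \<Rightarrow> nat set \<Rightarrow> real" where
  "estimator_weight D \<rho> i S =
     zv S i / measure_pmf.expectation D (\<lambda>T. zv T i)
     - (1 - zv S i) * \<rho> i / (measure_pmf.expectation D (\<lambda>T. zv T i) * (1 - \<rho> i))"

lemma zv_eq_indicator: "zv S i = indicator {S. i \<in> S} S"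
  by (simp add: zv_def indicator_def)

lemma expectation_zv: "measure_pmf.expectation D (\<lambda>S. zv S i) = measure_pmf.prob D {S. i \<in> S}"
  by (simp add: zv_eq_indicator)

lemma expectation_zv_mult:
  "measure_pmf.expectation D (\<lambda>S. zv S i * zv S k) = measure_pmf.prob D {S. i \<in> S \<and> k \<in> S}"
proof -
  have "(\<lambda>S. zv S i * zv S k) = indicator {S. i \<in> S \<and> k \<in> S}"
    by (auto simp: zv_def indicator_def)
  then show ?thesis by simp
qed

lemma integrable_zv: "integrable (measure_pmf D) (\<lambda>S. zv S i)"
  by (rule measure_pmf.integrable_const_bound[where B = 1]) (auto simp: zv_def)

lemma integrable_zv_mult: "integrable (measure_pmf D) (\<lambda>S. zv S i * zv S k)"
  by (rule measure_pmf.integrable_const_bound[where B = 1]) (auto simp: zv_def)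

lemma ATE_hat_minus_alpha_eq:
  "ATE_hat_minus_alpha D \<rho> \<alpha> \<beta> \<gamma> n S =
     (\<Sum>i<n. \<beta> i * (estimator_weight D \<rho> i S * zv S i)
            + (\<Sum>k<n. \<gamma> k i * (estimator_weight D \<rho> i S * zv S k))) / real n"
  unfolding ATE_hat_minus_alpha_def estimator_weight_def[symmetric] Ymodel_def
  by (simp add: algebra_simps sum_distrib_left)

lemma expectation_estimator_weight_self:
  assumes "measure_pmf.prob D {S. i \<in> S} \<noteq> 0"
  shows "measure_pmf.expectation D (\<lambda>S. estimator_weight D \<rho> i S * zv S i) = 1"
proof -
  have "(\<lambda>S. estimator_weight D \<rho> i S * zv S i)
      = (\<lambda>S. zv S i / measure_pmf.prob D {S. i \<in> S})"
    unfolding estimator_weight_def expectation_zv by (auto simp: zv_def)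
  then show ?thesis
    using assms by (simp add: expectation_zv)
qed

lemma expectation_estimator_weight_neighbour:
  assumes cond: "measure_pmf.prob D {S. i \<in> S \<and> k \<in> S} = \<rho> i * measure_pmf.prob D {S. k \<in> S}"
    and "\<rho> i \<noteq> 1"
  shows "measure_pmf.expectation D (\<lambda>S. estimator_weight D \<rho> i S * zv S k) = 0"
proof -
  define p where "p = measure_pmf.prob D {S. i \<in> S}"
  define q where "q = measure_pmf.prob D {S. k \<in> S}"
  have "(\<lambda>S. estimator_weight D \<rho> i S * zv S k)
      = (\<lambda>S. (1 / p + \<rho> i / (p * (1 - \<rho> i))) * (zv S i * zv S k) - \<rho> i / (p * (1 - \<rho> i)) * zv S k)"
    by (auto simp: estimator_weight_def expectation_zv p_def algebra_simps add_divide_distrib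
        diff_divide_distrib)
  then have "measure_pmf.expectation D (\<lambda>S. estimator_weight D \<rho> i S * zv S k)
      = (1 / p + \<rho> i / (p * (1 - \<rho> i))) * (\<rho> i * q) - \<rho> i / (p * (1 - \<rho> i)) * q"
    by (simp add: integrable_zv integrable_zv_mult expectation_zv_mult expectation_zv cond q_def)
  also have "\<dots> = 0"
    using \<open>\<rho> i \<noteq> 1\<close> by (cases "p = 0") (simp_all add: field_simps)
  finally show ?thesis .
qed

theorem theorem4:
  fixes n :: nat and D :: "nat set pmf" and E :: "(nat \<times> nat) set"
    and \<alpha> \<beta> \<rho> :: "nat \<Rightarrow> real" and \<gamma> :: "nat \<Rightarrow> nat \<Rightarrow> real"
  assumes design: "set_pmf D \<subseteq> Pow {..<n}"
    and E_sub: "E \<subseteq> {..<n} \<times> {..<n}"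
    and E_irrefl: "\<forall>(k, i) \<in> E. k \<noteq> i"
    and prop_pos: "\<forall>i<n. 0 < measure_pmf.expectation D (\<lambda>S. zv S i)"
    and prop_lt1: "\<forall>i<n. measure_pmf.expectation D (\<lambda>S. zv S i) < 1"
    and rho_range: "\<forall>i<n. 0 \<le> \<rho> i \<and> \<rho> i < 1"
    and edge_pos: "\<forall>(k, i) \<in> E. 0 < measure_pmf.prob D {S. k \<in> S}"
    and edge_cond: "\<forall>(k, i) \<in> E.
          measure_pmf.prob D {S. i \<in> S \<and> k \<in> S} / measure_pmf.prob D {S. k \<in> S} = \<rho> i"
    and gamma_E: "\<forall>k<n. \<forall>i<n. (k, i) \<notin> E \<longrightarrow> \<gamma> k i = 0"
  shows "measure_pmf.expectation D (ATE_hat_minus_alpha D \<rho> \<alpha> \<beta> \<gamma> n) = ATE n \<beta>"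
proof -
  let ?w = "estimator_weight D \<rho>"
  have "finite (set_pmf D)"
    using design by (meson finite_Pow_iff finite_lessThan finite_subset)
  then have integrable: "integrable (measure_pmf D) f" for f :: "nat set \<Rightarrow> real"
    by (simp add: integrable_measure_pmf_finite)
  have self: "measure_pmf.expectation D (\<lambda>S. ?w i S * zv S i) = 1" if "i < n" for i
    using prop_pos that by (intro expectation_estimator_weight_self) (force simp: expectation_zv)
  have neighbour: "\<gamma> k i * measure_pmf.expectation D (\<lambda>S. ?w i S * zv S k) = 0"
    if "i < n" "k < n" for i k
  proof (cases "(k, i) \<in> E")
    case True
    then have "measure_pmf.prob D {S. i \<in> S \<and> k \<in> S} = \<rho> i * measure_pmf.prob D {S. k \<in> S}"
      using edge_pos edge_cond by (force simp: field_simps)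
    moreover have "\<rho> i \<noteq> 1"
      using rho_range that by force
    ultimately show ?thesis
      by (simp add: expectation_estimator_weight_neighbour)
  qed (use gamma_E that in simp)
  have "measure_pmf.expectation D (ATE_hat_minus_alpha D \<rho> \<alpha> \<beta> \<gamma> n)
      = (\<Sum>i<n. \<beta> i * measure_pmf.expectation D (\<lambda>S. ?w i S * zv S i)
            + (\<Sum>k<n. \<gamma> k i * measure_pmf.expectation D (\<lambda>S. ?w i S * zv S k))) / real n"
    unfolding ATE_hat_minus_alpha_eq using integrable by (simp add: Bochner_Integration.integral_sum)
  also have "\<dots> = (\<Sum>i<n. \<beta> i) / real n"
    by (intro arg_cong[where f = "\<lambda>x. x / real n"] sum.cong refl)
       (simp add: self neighbour sum.neutral)
  finally show ?thesis
    by (simp add: ATE_def)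
qed

end
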